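(* Let $p_1,p_2,p_3\in\mathbb C$ be non-collinear with $|p_1-p_3|=1$, $|p_2-p_1|\le1$, $|p_2-p_3|\le1$, and let $\delta>0$ be twice the area of the triangle with vertices $p_1,p_2,p_3$. Write $p_j=re^{i\theta_j}$ with a common $r>0$ (the circumradius, after translating the circumcenter to $0$). For $\theta\in\mathbb R$ let $c_j(\theta)=r\cos(\theta_j-\theta)$. On any open interval of $\theta$ on which the labeling satisfies $c_1(\theta)\le c_2(\theta)\le c_3(\theta)$ (after a fixed permutation of indices), the function $t(\theta)=\frac{c_2(\theta)-c_1(\theta)}{c_3(\theta)-c_1(\theta)}$ is differentiable and satisfies $$\delta\le\Big|\frac{dt}{d\theta}\Big|\le\delta^{-1}.$$ *)

theory Defs
  imports "HOL-Analysis.Analysis"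
begin

definition twice_area :: "complex \<Rightarrow> complex \<Rightarrow> complex \<Rightarrow> real" where
  "twice_area a b c = \<bar>Im (cnj (b - a) * (c - a))\<bar>"

definition cproj :: "real \<Rightarrow> (nat \<Rightarrow> real) \<Rightarrow> nat \<Rightarrow> real \<Rightarrow> real" where
  "cproj r th j \<theta> = r * cos (th j - \<theta>)"

end

theory Submission
  imports Defs
begin

(* Put  a = p(s2) - p(s1)  and  b = p(s3) - p(s1),  where s is the given
   labelling, and write  dirproj t q = Re q cos t + Im q sin t  for the projection of q onto
   the direction of angle t.  Since  c_j(t) = dirproj t (p j),  the function in question is
   t(x) = dirproj x a / dirproj x b.  By the quotient rule its derivative at x is
   -cross a b / (dirproj x b)^2, where  cross a b = Im (cnj a * b)  is the 2D cross product,
   and  |cross a b|  is twice the triangle area delta.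
   The heart of the argument is the "width" estimate  delta <= dirproj x b <= 1  valid while
   0 <= dirproj x a <= dirproj x b: after rotating the direction x to the real axis,
   cross a b = Re a * Im (b - a) - Re (b - a) * Im a  is a combination of the two nonnegative
   widths Re a, Re (b - a) with coefficients of modulus <= 1 (all sides have length <= 1).
   Hence |t'(x)| = delta / (dirproj x b)^2 lies between delta and 1 / delta. *)

definition cross :: "complex \<Rightarrow> complex \<Rightarrow> real" where
  "cross a b = Im (cnj a * b)"

lemma cross_coords: "cross a b = Re a * Im b - Im a * Re b"
  by (simp add: cross_def algebra_simps)

lemma cross_eq_0_iff_collinear: "cross w z = 0 \<longleftrightarrow> collinear {0, w, z}"
proof (cases "w = 0")
  case True
  then show ?thesis by (simp add: cross_def collinear_2)
next
  case False
  then have "(Re w)^2 + (Im w)^2 \<noteq> 0" by (simp add: complex_eq_iff)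
  then show ?thesis
    using False by (auto simp: collinear_iff_Reals complex_is_Real_iff Im_divide cross_coords
                              algebra_simps complex_eq_iff)
qed

lemma cross_rotate: assumes "cmod e = 1" shows "cross (e * a) (e * b) = cross a b"
proof -
  have "cnj (e * a) * (e * b) = (e * cnj e) * (cnj a * b)"
    by (simp add: mult_ac)
  also have "\<dots> = complex_of_real ((cmod e)^2) * (cnj a * b)"
    by (simp only: complex_norm_square)
  finally have "cnj (e * a) * (e * b) = cnj a * b"
    using assms by simp
  then show ?thesis by (simp only: cross_def)
qed

definition dirproj :: "real \<Rightarrow> complex \<Rightarrow> real" where
  "dirproj t q = Re (cis (- t) * q)"

lemma dirproj_coords: "dirproj t q = Re q * cos t + Im q * sin t"
  by (simp add: dirproj_def)

lemma dirproj_diff: "dirproj t (a - b) = dirproj t a - dirproj t b"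
  by (simp add: dirproj_def algebra_simps)

lemma dirproj_le_norm: "dirproj t q \<le> cmod q"
  unfolding dirproj_def by (metis abs_Re_le_cmod abs_le_D1 norm_cis norm_mult mult_1)

lemma cproj_eq_dirproj:
  "cproj r th j x = dirproj x (complex_of_real r * exp (\<i> * complex_of_real (th j)))"
  by (simp add: cproj_def dirproj_coords cos_diff cis_conv_exp[symmetric] algebra_simps)

lemma dirproj_has_derivative:
  "((\<lambda>x. dirproj x q) has_real_derivative Im (cis (- t) * q)) (at t)"
  unfolding dirproj_coords by (auto intro!: derivative_eq_intros simp: algebra_simps)

lemma dirproj_ratio_has_derivative:
  assumes "dirproj t b \<noteq> 0"
  shows "((\<lambda>x. dirproj x a / dirproj x b) has_real_derivative - cross a b / (dirproj t b)^2) (at t)"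
proof -
  define a' b' where "a' = cis (- t) * a" and "b' = cis (- t) * b"
  have "Im a' * Re b' - Re a' * Im b' = - cross a' b'"
    by (simp add: cross_coords)
  also have "\<dots> = - cross a b"
    unfolding a'_def b'_def by (simp add: cross_rotate)
  finally have numerator: "Im a' * dirproj t b - dirproj t a * Im b' = - cross a b"
    by (simp add: dirproj_def a'_def b'_def)
  have "((\<lambda>x. dirproj x a / dirproj x b) has_real_derivative
          (Im a' * dirproj t b - dirproj t a * Im b') / (dirproj t b * dirproj t b)) (at t)"
    unfolding a'_def b'_def by (rule DERIV_divide[OF dirproj_has_derivative dirproj_has_derivative assms])
  then show ?thesis
    unfolding numerator power2_eq_square by simp
qed

lemma cross_le_dirproj:
  assumes "cmod a \<le> 1" "cmod (b - a) \<le> 1" "0 \<le> dirproj t a" "dirproj t a \<le> dirproj t b"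
  shows "\<bar>cross a b\<bar> \<le> dirproj t b"
proof -
  define a' b' where "a' = cis (- t) * a" and "b' = cis (- t) * b"
  have coords: "dirproj t a = Re a'" "dirproj t b = Re b'"
    by (simp_all add: dirproj_def a'_def b'_def)
  have "cross a b = cross a' b'"
    unfolding a'_def b'_def by (simp add: cross_rotate)
  also have "\<dots> = Re a' * Im (b' - a') - Re (b' - a') * Im a'"
    by (simp add: cross_coords algebra_simps)
  finally have split: "cross a b = Re a' * Im (b' - a') - Re (b' - a') * Im a'" .
  have "\<bar>Im a'\<bar> \<le> 1"
    using abs_Im_le_cmod[of a'] assms(1) by (simp add: a'_def norm_mult)
  moreover have "\<bar>Im (b' - a')\<bar> \<le> 1"
    using abs_Im_le_cmod[of "b' - a'"] assms(2)
    by (simp add: a'_def b'_def norm_mult flip: right_diff_distrib)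
  ultimately have "\<bar>Re a' * Im (b' - a')\<bar> \<le> Re a'" "\<bar>Re (b' - a') * Im a'\<bar> \<le> Re (b' - a')"
    using assms(3,4) by (auto simp: coords abs_mult intro: mult_left_le)
  moreover have "Re b' = Re a' + Re (b' - a')"
    by simp
  ultimately show ?thesis
    using abs_triangle_ineq4[of "Re a' * Im (b' - a')" "Re (b' - a') * Im a'"]
    unfolding split coords by linarith
qed

lemma dirproj_ratio_derivative_bounds:
  assumes a: "cmod a \<le> 1" and b: "cmod b \<le> 1" and ba: "cmod (b - a) \<le> 1"
    and nondeg: "cross a b \<noteq> 0"
    and order: "0 \<le> dirproj t a" "dirproj t a \<le> dirproj t b"
  shows "(\<lambda>x. dirproj x a / dirproj x b) differentiable (at t) \<and>
         \<bar>cross a b\<bar> \<le> \<bar>deriv (\<lambda>x. dirproj x a / dirproj x b) t\<bar> \<and>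
         \<bar>deriv (\<lambda>x. dirproj x a / dirproj x b) t\<bar> \<le> inverse \<bar>cross a b\<bar>"
proof -
  define c D where "c = \<bar>cross a b\<bar>" and "D = dirproj t b"
  have "c \<le> D"
    unfolding c_def D_def using a ba order by (rule cross_le_dirproj)
  moreover have "D \<le> 1"
    unfolding D_def using dirproj_le_norm b by (rule order_trans)
  moreover have "0 < c"
    unfolding c_def using nondeg by simp
  ultimately have c_D: "0 < c" "c \<le> D" "D \<le> 1" "0 < D"
    by linarith+
  have der: "((\<lambda>x. dirproj x a / dirproj x b) has_real_derivative - cross a b / D^2) (at t)"
    unfolding D_def using c_D by (intro dirproj_ratio_has_derivative) (simp add: D_def)
  have abs_deriv: "\<bar>deriv (\<lambda>x. dirproj x a / dirproj x b) t\<bar> = c / D^2"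
    using DERIV_imp_deriv[OF der] by (simp add: c_def)
  have "c \<le> c / D^2"
    using c_D by (simp add: le_divide_eq power_le_one)
  moreover have "c / D^2 \<le> c / c^2"
    using c_D by (intro divide_left_mono power_mono mult_pos_pos) auto
  moreover have "c / c^2 = inverse c"
    using c_D by (simp add: power2_eq_square inverse_eq_divide)
  moreover have "(\<lambda>x. dirproj x a / dirproj x b) differentiable (at t)"
    using der unfolding has_field_derivative_def by (rule differentiableI)
  ultimately show ?thesis
    unfolding abs_deriv c_def by simp
qed

lemma twice_area_eq_cross: "twice_area a b c = \<bar>cross (b - a) (c - a)\<bar>"
  by (simp add: twice_area_def cross_def)

lemma twice_area_swap12: "twice_area b a c = twice_area a b c"
  by (simp add: twice_area_eq_cross cross_coords abs_minus_commute algebra_simps)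

lemma twice_area_swap23: "twice_area a c b = twice_area a b c"
  by (simp add: twice_area_eq_cross cross_coords abs_minus_commute algebra_simps)

lemma twice_area_pos:
  assumes "\<not> collinear {a, b, c}"
  shows "0 < twice_area a b c"
proof -
  have "\<not> collinear {0, b - a, c - a}"
    using assms collinear_3[of b a c] by (simp add: insert_commute[of b a])
  then show ?thesis
    unfolding twice_area_eq_cross by (simp add: cross_eq_0_iff_collinear)
qed

lemma twice_area_permute:
  fixes p :: "nat \<Rightarrow> complex"
  assumes "\<sigma> permutes {1, 2, 3}"
  shows "twice_area (p (\<sigma> 1)) (p (\<sigma> 2)) (p (\<sigma> 3)) = twice_area (p 1) (p 2) (p 3)"
proof -
  have arrangements: "(x, y, z) \<in> {(1, 2, 3), (1, 3, 2), (2, 1, 3), (2, 3, 1), (3, 1, 2), (3, 2, 1)}"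
    if "x \<in> {1, 2, 3}" "y \<in> {1, 2, 3}" "z \<in> {1, 2, 3}" "x \<noteq> y" "x \<noteq> z" "y \<noteq> z"
    for x y z :: nat
    using that by (simp only: insert_iff empty_iff prod.inject) blast
  have "\<sigma> 1 \<in> {1, 2, 3}" "\<sigma> 2 \<in> {1, 2, 3}" "\<sigma> 3 \<in> {1, 2, 3}"
    unfolding permutes_in_image[OF assms] by simp_all
  moreover have "\<sigma> 1 \<noteq> \<sigma> 2" "\<sigma> 1 \<noteq> \<sigma> 3" "\<sigma> 2 \<noteq> \<sigma> 3"
    using permutes_inj[OF assms] by (simp_all add: inj_eq)
  ultimately have "(\<sigma> 1, \<sigma> 2, \<sigma> 3) \<in> {(1, 2, 3), (1, 3, 2), (2, 1, 3), (2, 3, 1), (3, 1, 2), (3, 2, 1)}"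
    by (rule arrangements)
  then show ?thesis
    by (elim insertE emptyE; simp only: prod.inject; metis twice_area_swap12 twice_area_swap23)
qed

theorem mainTheorem14:
  fixes p :: "nat \<Rightarrow> complex" and th :: "nat \<Rightarrow> real" and r \<delta> :: real
    and \<sigma> :: "nat \<Rightarrow> nat" and I :: "real set"
  assumes noncol: "\<not> collinear {p 1, p 2, p 3}"
    and d13: "cmod (p 1 - p 3) = 1"
    and d21: "cmod (p 2 - p 1) \<le> 1"
    and d23: "cmod (p 2 - p 3) \<le> 1"
    and delta: "\<delta> = twice_area (p 1) (p 2) (p 3)"
    and r_pos: "r > 0"
    and polar: "\<And>j. j \<in> {1, 2, 3} \<Longrightarrow> p j = complex_of_real r * exp (\<i> * complex_of_real (th j))"
    and perm: "\<sigma> permutes {1, 2, 3}"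
    and I_open: "open I" and I_int: "is_interval I"
    and order: "\<And>\<theta>. \<theta> \<in> I \<Longrightarrow>
                 cproj r th (\<sigma> 1) \<theta> \<le> cproj r th (\<sigma> 2) \<theta> \<and>
                 cproj r th (\<sigma> 2) \<theta> \<le> cproj r th (\<sigma> 3) \<theta>"
  shows "\<forall>\<theta>\<in>I.
           (\<lambda>x. (cproj r th (\<sigma> 2) x - cproj r th (\<sigma> 1) x) /
                 (cproj r th (\<sigma> 3) x - cproj r th (\<sigma> 1) x)) differentiable (at \<theta>) \<and>
           \<delta> \<le> \<bar>deriv (\<lambda>x. (cproj r th (\<sigma> 2) x - cproj r th (\<sigma> 1) x) /
                 (cproj r th (\<sigma> 3) x - cproj r th (\<sigma> 1) x)) \<theta>\<bar> \<and>
           \<bar>deriv (\<lambda>x. (cproj r th (\<sigma> 2) x - cproj r th (\<sigma> 1) x) /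
                 (cproj r th (\<sigma> 3) x - cproj r th (\<sigma> 1) x)) \<theta>\<bar> \<le> inverse \<delta>"
proof -
  have idx: "\<sigma> 1 \<in> {1, 2, 3}" "\<sigma> 2 \<in> {1, 2, 3}" "\<sigma> 3 \<in> {1, 2, 3}"
    unfolding permutes_in_image[OF perm] by simp_all
  have cproj_p: "cproj r th j x = dirproj x (p j)" if "j \<in> {1, 2, 3}" for j x
    using polar[OF that] by (simp add: cproj_eq_dirproj)
  note cproj_\<sigma> = cproj_p[OF idx(1)] cproj_p[OF idx(2)] cproj_p[OF idx(3)]
  define a b where "a = p (\<sigma> 2) - p (\<sigma> 1)" and "b = p (\<sigma> 3) - p (\<sigma> 1)"
  have ratio: "(\<lambda>x. (cproj r th (\<sigma> 2) x - cproj r th (\<sigma> 1) x) /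
                    (cproj r th (\<sigma> 3) x - cproj r th (\<sigma> 1) x)) = (\<lambda>x. dirproj x a / dirproj x b)"
    by (simp only: cproj_\<sigma> a_def b_def dirproj_diff)
  have close: "cmod (p j - p k) \<le> 1" if "j \<in> {1, 2, 3}" "k \<in> {1, 2, 3}" for j k
    using that d13 d21 d23 by (auto simp: norm_minus_commute)
  have sides: "cmod a \<le> 1" "cmod b \<le> 1" "cmod (b - a) \<le> 1"
    using close idx by (simp_all add: a_def b_def)
  have area: "\<bar>cross a b\<bar> = \<delta>"
    using twice_area_permute[OF perm, of p] by (simp add: delta twice_area_eq_cross a_def b_def)
  have nondeg: "cross a b \<noteq> 0"
    using twice_area_pos[OF noncol] area delta by auto
  show ?thesis
    unfolding ratio area[symmetric]
  proof
    fix \<theta> assume "\<theta> \<in> I"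
    then have "0 \<le> dirproj \<theta> a" "dirproj \<theta> a \<le> dirproj \<theta> b"
      using order unfolding cproj_\<sigma> a_def b_def dirproj_diff by fastforce+
    then show "(\<lambda>x. dirproj x a / dirproj x b) differentiable (at \<theta>) \<and>
         \<bar>cross a b\<bar> \<le> \<bar>deriv (\<lambda>x. dirproj x a / dirproj x b) \<theta>\<bar> \<and>
         \<bar>deriv (\<lambda>x. dirproj x a / dirproj x b) \<theta>\<bar> \<le> inverse \<bar>cross a b\<bar>"
      by (rule dirproj_ratio_derivative_bounds[OF sides nondeg])
  qed
qed

end
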